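(* Let $x\in\mathbb{R}_{\mathrm{alg}}^\times$ and $p\in\mathcal{P}_{KZ}$ with $p\notin\mathbb{R}_{\mathrm{alg}}$. Then $\deg(x+p)=\deg(p)$.
   Context: $\mathbb{R}_{\mathrm{alg}}=\mathbb{R}\cap\overline{\mathbb{Q}}$. Semialgebraic subsets of $\mathbb{R}^n$ are finite unions of finite intersections of sets $\{f=0\}$, $\{g>0\}$ with $f,g\in\mathbb{R}_{\mathrm{alg}}[T_1,\dots,T_n]$; $\mathcal{SA}^n$ denotes those with nonempty interior. A period is a real number $\int_X (P/Q)(x)\,dx$ (absolutely convergent) with $X\in\mathcal{SA}^n$, $P,Q\in\mathbb{R}_{\mathrm{alg}}[T_1,\dots,T_n]$, $Q$ not identically zero on $X$; $\mathcal{P}_{KZ}$ is the set of periods (it is an $\mathbb{R}_{\mathrm{alg}}$-algebra). For a nonzero period $p$ there exists a positive integer $k$ and a compact $K\in\mathcal{SA}^k$ with $|p|=\mathrm{vol}_k(K)$; $\deg(p)$ is the smallest such $k$, and $\deg(0)=0$. *)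

theory Defs
  imports "HOL-Analysis.Analysis" "HOL-Computational_Algebra.Polynomial"
begin

text \<open>Points of R^n are represented as extensional functions on {..<n};
  R^n carries the n-fold product of Lebesgue-Borel measure.\<close>

definition Rn :: "nat \<Rightarrow> (nat \<Rightarrow> real) set" where
  "Rn n = PiE {..<n} (\<lambda>_. UNIV)"

definition lebn :: "nat \<Rightarrow> (nat \<Rightarrow> real) measure" where
  "lebn n = PiM {..<n} (\<lambda>_. lborel)"

definition ralg :: "real \<Rightarrow> bool" where
  "ralg x \<longleftrightarrow> algebraic x"

inductive_set alg_poly :: "nat \<Rightarrow> ((nat \<Rightarrow> real) \<Rightarrow> real) set" for n :: nat where
  const: "ralg c \<Longrightarrow> (\<lambda>x. c) \<in> alg_poly n"
| var: "i < n \<Longrightarrow> (\<lambda>x. x i) \<in> alg_poly n"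
| add: "f \<in> alg_poly n \<Longrightarrow> g \<in> alg_poly n \<Longrightarrow> (\<lambda>x. f x + g x) \<in> alg_poly n"
| mult: "f \<in> alg_poly n \<Longrightarrow> g \<in> alg_poly n \<Longrightarrow> (\<lambda>x. f x * g x) \<in> alg_poly n"

text \<open>Semialgebraic subsets of R^n: generated from {f = 0}, {g > 0} by finite
  (binary) unions and intersections; this gives exactly the finite unions of
  finite intersections of such sets.\<close>
inductive_set semialg :: "nat \<Rightarrow> (nat \<Rightarrow> real) set set" for n :: nat where
  zero: "f \<in> alg_poly n \<Longrightarrow> {x \<in> Rn n. f x = 0} \<in> semialg n"
| pos: "g \<in> alg_poly n \<Longrightarrow> {x \<in> Rn n. g x > 0} \<in> semialg n"
| inter: "A \<in> semialg n \<Longrightarrow> B \<in> semialg n \<Longrightarrow> A \<inter> B \<in> semialg n"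
| union: "A \<in> semialg n \<Longrightarrow> B \<in> semialg n \<Longrightarrow> A \<union> B \<in> semialg n"

text \<open>Nonempty interior in R^n (Euclidean topology, via coordinate boxes).\<close>
definition nonempty_interior :: "nat \<Rightarrow> (nat \<Rightarrow> real) set \<Rightarrow> bool" where
  "nonempty_interior n X \<longleftrightarrow>
     (\<exists>x\<in>X. \<exists>e>0. \<forall>y\<in>Rn n. (\<forall>i<n. \<bar>y i - x i\<bar> < e) \<longrightarrow> y \<in> X)"

definition SA :: "nat \<Rightarrow> (nat \<Rightarrow> real) set set" where
  "SA n = {X \<in> semialg n. nonempty_interior n X}"

text \<open>Kontsevich--Zagier periods: absolutely convergent (= Lebesgue integrable)
  integrals of P/Q over X in SA^n, with Q vanishing only on a null subset of X.\<close>
definition periods :: "real set" where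
  "periods = {p. \<exists>n>0. \<exists>X P Q. X \<in> SA n \<and> P \<in> alg_poly n \<and> Q \<in> alg_poly n \<and>
      (AE x in lebn n. x \<in> X \<longrightarrow> Q x \<noteq> 0) \<and>
      set_integrable (lebn n) X (\<lambda>x. P x / Q x) \<and>
      p = (LINT x:X|lebn n. P x / Q x)}"

definition period_deg :: "real \<Rightarrow> nat" where
  "period_deg p = (if p = 0 then 0 else
     (LEAST k. k > 0 \<and> (\<exists>K. K \<in> SA k \<and> compact K \<and> \<bar>p\<bar> = measure (lebn k) K)))"

end

theory Submission
  imports Defs
begin

text \<open>For \<open>k \<ge> 1\<close> let \<open>V\<^sub>k\<close> be the set of volumes of compact semialgebraic
  subsets of \<open>\<real>\<^sup>k\<close>. If \<open>v \<in> V\<^sub>k\<close> and \<open>c\<close> is algebraic, then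
  \<open>v + c \<in> V\<^sub>k\<close> when \<open>v + c \<ge> 0\<close>, and \<open>c - v \<in> V\<^sub>k\<close> when \<open>c \<ge> v\<close>. Adding \<open>c \<ge> 0\<close>
  means attaching a disjoint box of volume \<open>c\<close>. Subtracting \<open>c\<close> means cutting open
  boxes with algebraic corners out of \<open>K\<close>: this is possible because the boundary of a
  semialgebraic set is a null set, so the closed dyadic cubes inside \<open>K\<close> exhaust its volume.
  Finally \<open>c - v\<close> is obtained from the complement of \<open>K\<close> in a large box. Hence
  \<open>\<bar>p\<bar> \<in> V\<^sub>k\<close> iff \<open>\<bar>x + p\<bar> \<in> V\<^sub>k\<close>, and as positive volume forces nonempty
  interior, \<open>deg p\<close> and \<open>deg (x + p)\<close> are the least such \<open>k\<close>.\<close>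

lemma ralg_affine:
  assumes "ralg x" "q \<in> \<rat>" "r \<in> \<rat>"
  shows "ralg (q * x + r)"
proof (cases "q = 0")
  case True
  then show ?thesis using assms(3) by (simp add: ralg_def rat_imp_algebraic)
next
  case False
  from assms(1) obtain p where p: "\<forall>i. coeff p i \<in> \<rat>" "p \<noteq> 0" "poly p x = 0"
    unfolding ralg_def algebraic_altdef by blast
  define s where "s = pcompose p [:- r / q, 1 / q:]"
  have "poly s (q * x + r) = poly p x"
    using False by (simp add: s_def poly_pcompose field_simps)
  moreover have "s \<noteq> 0"
    using p False by (auto simp: s_def pcompose_eq_0_iff)
  moreover have "coeff s i \<in> \<rat>" for i
    unfolding s_def using p assms(2,3)
    by (intro coeff_pcompose_semiring_closed) (auto simp: coeff_pCons split: nat.splits)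
  ultimately show ?thesis
    using p(3) unfolding ralg_def by (intro algebraicI') auto
qed

lemma ralg_rat: "q \<in> \<rat> \<Longrightarrow> ralg q"
  by (simp add: ralg_def rat_imp_algebraic)

lemma ralg_uminus [simp]: "ralg (- x) \<longleftrightarrow> ralg x"
  by (simp add: ralg_def)

lemma ralg_add_rat: "ralg x \<Longrightarrow> q \<in> \<rat> \<Longrightarrow> ralg (x + q)"
  using ralg_affine[of x 1 q] by simp

lemma ralg_diff_rat: "ralg x \<Longrightarrow> q \<in> \<rat> \<Longrightarrow> ralg (x - q)"
  using ralg_add_rat[of x "- q"] by simp

lemma alg_poly_const_rat: "q \<in> \<rat> \<Longrightarrow> (\<lambda>x. q) \<in> alg_poly n"
  by (rule alg_poly.const) (rule ralg_rat)

lemma alg_poly_uminus: "f \<in> alg_poly n \<Longrightarrow> (\<lambda>x. - f x) \<in> alg_poly n"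
  using alg_poly.mult[OF alg_poly_const_rat[of "-1"]] by simp

lemma alg_poly_diff: "f \<in> alg_poly n \<Longrightarrow> g \<in> alg_poly n \<Longrightarrow> (\<lambda>x. f x - g x) \<in> alg_poly n"
  using alg_poly.add[OF _ alg_poly_uminus] by simp

lemma alg_poly_sum:
  "finite I \<Longrightarrow> (\<And>i. i \<in> I \<Longrightarrow> f i \<in> alg_poly n) \<Longrightarrow> (\<lambda>x. \<Sum>i\<in>I. f i x) \<in> alg_poly n"
  by (induction I rule: finite_induct) (auto intro: alg_poly.add alg_poly_const_rat)

lemma alg_poly_cong_Rn:
  "f \<in> alg_poly n \<Longrightarrow> (\<And>i. i < n \<Longrightarrow> x i = y i) \<Longrightarrow> f x = f y"
  by (induction f rule: alg_poly.induct) auto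

lemma space_lebn [simp]: "space (lebn n) = Rn n"
  by (simp add: lebn_def Rn_def space_PiM)

lemma alg_poly_measurable: "f \<in> alg_poly n \<Longrightarrow> f \<in> borel_measurable (lebn n)"
  unfolding lebn_def by (induction f rule: alg_poly.induct) auto

lemma alg_poly_continuous: "f \<in> alg_poly n \<Longrightarrow> continuous_on UNIV f"
  by (induction f rule: alg_poly.induct) (auto intro!: continuous_intros)

lemma alg_poly_Suc_decomp:
  assumes "f \<in> alg_poly (Suc n)"
  obtains P where "\<And>x. f x = poly (P x) (x n)" "\<And>e. (\<lambda>x. coeff (P x) e) \<in> alg_poly n"
proof -
  have "\<exists>P. (\<forall>x. f x = poly (P x) (x n)) \<and> (\<forall>e. (\<lambda>x. coeff (P x) e) \<in> alg_poly n)"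
    using assms
  proof (induction f rule: alg_poly.induct)
    case (const c)
    have "(\<lambda>x. coeff [:c:] e) \<in> alg_poly n" for e
      using const by (cases e) (auto intro: alg_poly.const alg_poly_const_rat)
    then show ?case by (intro exI[of _ "\<lambda>x. [:c:]"]) auto
  next
    case (var i)
    show ?case
    proof (cases "i = n")
      case True
      have "(\<lambda>x. coeff [:0, 1:] e) \<in> alg_poly n" for e :: nat
        by (cases e) (auto simp: coeff_pCons split: nat.split intro: alg_poly_const_rat)
      with True show ?thesis by (intro exI[of _ "\<lambda>x. [:0, 1:]"]) auto
    next
      case False
      with var have "(\<lambda>x. coeff [:x i:] e) \<in> alg_poly n" for e
        by (cases e) (auto intro: alg_poly.var alg_poly_const_rat)
      then show ?thesis by (intro exI[of _ "\<lambda>x. [:x i:]"]) auto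
    qed
  next
    case (add f g)
    then obtain P Q where "\<forall>x. f x = poly (P x) (x n)" "\<forall>e. (\<lambda>x. coeff (P x) e) \<in> alg_poly n"
      "\<forall>x. g x = poly (Q x) (x n)" "\<forall>e. (\<lambda>x. coeff (Q x) e) \<in> alg_poly n"
      by blast
    then show ?case
      by (intro exI[of _ "\<lambda>x. P x + Q x"]) (auto intro: alg_poly.add)
  next
    case (mult f g)
    then obtain P Q where "\<forall>x. f x = poly (P x) (x n)" "\<forall>e. (\<lambda>x. coeff (P x) e) \<in> alg_poly n"
      "\<forall>x. g x = poly (Q x) (x n)" "\<forall>e. (\<lambda>x. coeff (Q x) e) \<in> alg_poly n"
      by blast
    then show ?case
      by (intro exI[of _ "\<lambda>x. P x * Q x"])
        (auto simp: coeff_mult intro!: alg_poly_sum alg_poly.mult)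
  qed
  then show ?thesis using that by blast
qed

section \<open>Semialgebraic sets\<close>

lemma semialg_subset_Rn: "A \<in> semialg n \<Longrightarrow> A \<subseteq> Rn n"
  by (induction A rule: semialg.induct) auto

lemma sets_lebn_semialg: "A \<in> semialg n \<Longrightarrow> A \<in> sets (lebn n)"
proof (induction A rule: semialg.induct)
  case (zero f)
  have [measurable]: "f \<in> borel_measurable (lebn n)" using zero by (rule alg_poly_measurable)
  have "{x \<in> space (lebn n). f x = 0} \<in> sets (lebn n)" by measurable
  then show ?case by simp
next
  case (pos g)
  have [measurable]: "g \<in> borel_measurable (lebn n)" using pos by (rule alg_poly_measurable)
  have "{x \<in> space (lebn n). g x > 0} \<in> sets (lebn n)" by measurable
  then show ?case by simp
qed auto

lemma semialg_Rn: "Rn n \<in> semialg n"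
  using semialg.zero[OF alg_poly_const_rat[of 0]] by simp

lemma semialg_empty: "{} \<in> semialg n"
  using semialg.zero[OF alg_poly_const_rat[of 1]] by simp

lemma semialg_nonneg: "f \<in> alg_poly n \<Longrightarrow> {x \<in> Rn n. f x \<ge> 0} \<in> semialg n"
proof -
  assume f: "f \<in> alg_poly n"
  have "{x \<in> Rn n. f x \<ge> 0} = {x \<in> Rn n. f x = 0} \<union> {x \<in> Rn n. f x > 0}" by auto
  then show ?thesis using semialg.union[OF semialg.zero[OF f] semialg.pos[OF f]] by simp
qed

lemma semialg_Compl: "A \<in> semialg n \<Longrightarrow> Rn n - A \<in> semialg n"
proof (induction A rule: semialg.induct)
  case (zero f)
  have "Rn n - {x \<in> Rn n. f x = 0} = {x \<in> Rn n. f x > 0} \<union> {x \<in> Rn n. - f x > 0}" by auto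
  then show ?case
    using semialg.union[OF semialg.pos[OF zero] semialg.pos[OF alg_poly_uminus[OF zero]]] by simp
next
  case (pos g)
  have "Rn n - {x \<in> Rn n. g x > 0} = {x \<in> Rn n. - g x \<ge> 0}" by auto
  then show ?case using semialg_nonneg[OF alg_poly_uminus[OF pos]] by simp
next
  case (inter A B)
  have "Rn n - (A \<inter> B) = (Rn n - A) \<union> (Rn n - B)" by auto
  then show ?case using semialg.union[OF inter.IH] by simp
next
  case (union A B)
  have "Rn n - (A \<union> B) = (Rn n - A) \<inter> (Rn n - B)" by auto
  then show ?case using semialg.inter[OF union.IH] by simp
qed

lemma semialg_Diff: "A \<in> semialg n \<Longrightarrow> B \<in> semialg n \<Longrightarrow> A - B \<in> semialg n"
proof -
  assume A: "A \<in> semialg n" and B: "B \<in> semialg n"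
  have "A - B = A \<inter> (Rn n - B)" using semialg_subset_Rn[OF A] by auto
  then show ?thesis using semialg.inter[OF A semialg_Compl[OF B]] by simp
qed

lemma semialg_INT_lessThan:
  fixes m :: nat
  assumes "\<And>i. i < m \<Longrightarrow> {x \<in> Rn n. P i x} \<in> semialg n"
  shows "{x \<in> Rn n. \<forall>i<m. P i x} \<in> semialg n"
  using assms
proof (induction m)
  case 0
  then show ?case using semialg_Rn by simp
next
  case (Suc m)
  have "{x \<in> Rn n. \<forall>i<Suc m. P i x} = {x \<in> Rn n. \<forall>i<m. P i x} \<inter> {x \<in> Rn n. P m x}"
    by (auto simp: less_Suc_eq)
  then show ?case using Suc by (simp add: semialg.inter)
qed

lemma closed_Rn: "closed (Rn n)"
proof -
  have "Rn n = {x. \<forall>i. n \<le> i \<longrightarrow> x i = undefined}"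
    by (rule set_eqI) (simp add: Rn_def PiE_iff extensional_def not_less)
  also have "closed \<dots>"
  proof (intro closed_Collect_all)
    fix i
    show "closed {x :: nat \<Rightarrow> real. n \<le> i \<longrightarrow> x i = undefined}"
      by (cases "n \<le> i")
        (simp_all add: closed_Collect_eq[OF continuous_on_product_coordinates continuous_on_const])
  qed
  finally show ?thesis .
qed

lemma closed_alg_poly_zero: "f \<in> alg_poly n \<Longrightarrow> closed {x \<in> Rn n. f x = 0}"
proof -
  assume "f \<in> alg_poly n"
  then have "closed (Rn n \<inter> {x. f x = 0})"
    by (intro closed_Int closed_Rn closed_Collect_eq alg_poly_continuous continuous_on_const)
  then show ?thesis by (simp only: Int_def Collect_conj_eq[symmetric] mem_Collect_eq)
qed

lemma closed_alg_poly_nonneg: "f \<in> alg_poly n \<Longrightarrow> closed {x \<in> Rn n. f x \<ge> 0}"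
proof -
  assume "f \<in> alg_poly n"
  then have "closed (Rn n \<inter> {x. 0 \<le> f x})"
    by (intro closed_Int closed_Rn closed_Collect_le alg_poly_continuous continuous_on_const)
  then show ?thesis by (simp only: Int_def Collect_conj_eq[symmetric] mem_Collect_eq)
qed

section \<open>Null sets and interior points\<close>

definition Rn_interior_point :: "nat \<Rightarrow> (nat \<Rightarrow> real) set \<Rightarrow> (nat \<Rightarrow> real) \<Rightarrow> bool" where
  "Rn_interior_point n A x \<longleftrightarrow> (\<exists>e>0. \<forall>y\<in>Rn n. (\<forall>i<n. \<bar>y i - x i\<bar> < e) \<longrightarrow> y \<in> A)"

lemma nonempty_interior_iff: "nonempty_interior n A \<longleftrightarrow> (\<exists>x\<in>A. Rn_interior_point n A x)"
  by (simp add: nonempty_interior_def Rn_interior_point_def)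

definition coord_nhds :: "nat \<Rightarrow> (nat \<Rightarrow> real) \<Rightarrow> (nat \<Rightarrow> real) filter" where
  "coord_nhds n x = (INF e\<in>{0<..}. principal {y. \<forall>i<n. \<bar>y i - x i\<bar> < e})"

lemma eventually_coord_nhds:
  "eventually P (coord_nhds n x) \<longleftrightarrow> (\<exists>e>0. \<forall>y. (\<forall>i<n. \<bar>y i - x i\<bar> < e) \<longrightarrow> P y)"
proof -
  have "eventually P (coord_nhds n x) \<longleftrightarrow>
      (\<exists>e\<in>{0<..}. eventually P (principal {y. \<forall>i<n. \<bar>y i - x i\<bar> < e}))"
    unfolding coord_nhds_def
  proof (rule eventually_INF_base)
    fix a b :: real assume "a \<in> {0<..}" "b \<in> {0<..}"
    then show "\<exists>e\<in>{0<..}. principal {y. \<forall>i<n. \<bar>y i - x i\<bar> < e} \<le>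
        inf (principal {y. \<forall>i<n. \<bar>y i - x i\<bar> < a}) (principal {y. \<forall>i<n. \<bar>y i - x i\<bar> < b})"
      by (intro bexI[of _ "min a b"]) auto
  qed auto
  then show ?thesis by (auto simp: eventually_principal)
qed

lemma alg_poly_tendsto_coord_nhds: "f \<in> alg_poly n \<Longrightarrow> (f \<longlongrightarrow> f x) (coord_nhds n x)"
proof (induction f rule: alg_poly.induct)
  case (var i)
  show ?case
  proof (rule tendstoI)
    fix e :: real assume "e > 0"
    then show "eventually (\<lambda>y. dist (y i) (x i) < e) (coord_nhds n x)"
      using var by (auto simp: eventually_coord_nhds dist_real_def)
  qed
qed (auto intro!: tendsto_intros)

lemma alg_poly_pos_interior_point:
  assumes "g \<in> alg_poly n" "g x > 0"
  shows "Rn_interior_point n {x \<in> Rn n. g x > 0} x"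
proof -
  have "eventually (\<lambda>y. dist (g y) (g x) < g x) (coord_nhds n x)"
    using tendstoD[OF alg_poly_tendsto_coord_nhds[OF assms(1)] assms(2)] .
  then obtain e where "e > 0" "\<And>y. (\<forall>i<n. \<bar>y i - x i\<bar> < e) \<Longrightarrow> \<bar>g y - g x\<bar> < g x"
    by (auto simp: eventually_coord_nhds dist_real_def)
  then show ?thesis unfolding Rn_interior_point_def by (intro exI[of _ e]) force
qed

lemma null_sets_lebn_SucI:
  assumes Z: "Z \<in> sets (lebn (Suc n))"
    and fibres: "AE x in lebn n. countable {t. x(n := t) \<in> Z}"
  shows "Z \<in> null_sets (lebn (Suc n))"
proof -
  interpret product_sigma_finite "\<lambda>_ :: nat. lborel :: real measure" by standard
  let ?M = "\<lambda>I. PiM I (\<lambda>_ :: nat. lborel :: real measure)"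
  define F where "F x = (\<lambda>y. merge {..<n} {n} (x, y)) -` Z \<inter> space (?M {n})" for x
  have split: "{..<Suc n} = {..<n} \<union> {n}" by auto
  have "emeasure (?M ({..<n} \<union> {n})) Z = (\<integral>\<^sup>+x. emeasure (?M {n}) (F x) \<partial>?M {..<n})"
    unfolding F_def using Z by (intro emeasure_fold_integral) (auto simp: lebn_def split)
  also have "\<dots> = (\<integral>\<^sup>+x. 0 \<partial>?M {..<n})"
  proof (rule nn_integral_cong_AE)
    have "AE x in lebn n. emeasure (?M {n}) (F x) = 0"
      using fibres AE_space
    proof eventually_elim
      case (elim x)
      then have x: "x \<in> Rn n" by simp
      let ?R = "{t. x(n := t) \<in> Z}"
      have R: "?R \<in> null_sets lborel" by (rule countable_imp_null_set_lborel[OF elim(1)])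
      have "F x \<subseteq> PiE {n} (\<lambda>_. ?R)"
      proof
        fix y assume y: "y \<in> F x"
        have "merge {..<n} {n} (x, y) = x(n := y n)"
          using x by (auto simp: Rn_def PiE_iff extensional_def)
        then show "y \<in> PiE {n} (\<lambda>_. ?R)"
          using y by (auto simp: F_def space_PiM PiE_iff)
      qed
      moreover have "emeasure (?M {n}) (PiE {n} (\<lambda>_. ?R)) = 0"
        using R by (subst emeasure_PiM) auto
      moreover have "PiE {n} (\<lambda>_. ?R) \<in> sets (?M {n})"
        using R by (intro sets_PiM_I_finite) auto
      ultimately show ?case by (metis emeasure_mono le_zero_eq)
    qed
    then show "AE x in ?M {..<n}. emeasure (?M {n}) (F x) = 0"
      by (simp only: lebn_def)
  qed
  finally show ?thesis using Z by (simp add: lebn_def split null_sets_def)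
qed

text \<open>Induction on the number of variables: by induction hypothesis some coefficient of
  \<open>f\<close> as a polynomial in the last variable is nonzero almost everywhere, and there the
  fibre of the zero set is the finite root set of a nonzero polynomial.\<close>

lemma alg_poly_zero_set_null:
  "f \<in> alg_poly n \<Longrightarrow> x0 \<in> Rn n \<Longrightarrow> f x0 \<noteq> 0 \<Longrightarrow> {x \<in> Rn n. f x = 0} \<in> null_sets (lebn n)"
proof (induction n arbitrary: f x0)
  case 0
  then have "Rn 0 = {x0}" by (auto simp: Rn_def)
  with 0 have empty: "{x \<in> Rn 0. f x = 0} = {}" by auto
  show ?case unfolding empty by simp
next
  case (Suc n)
  obtain P where P: "\<And>x. f x = poly (P x) (x n)" "\<And>e. (\<lambda>x. coeff (P x) e) \<in> alg_poly n"
    using alg_poly_Suc_decomp[OF Suc.prems(1)] by blast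
  have P_cong: "P x = P y" if "\<And>i. i < n \<Longrightarrow> x i = y i" for x y
    using alg_poly_cong_Rn[OF P(2) that] by (intro poly_eqI)
  obtain e where e: "coeff (P x0) e \<noteq> 0"
    using Suc.prems(3) P(1)[of x0] by (metis poly_0 poly_eqI coeff_0)
  define x0' where "x0' = restrict x0 {..<n}"
  have "x0' \<in> Rn n" by (simp add: x0'_def Rn_def)
  moreover have "coeff (P x0') e \<noteq> 0"
    using e P_cong[of x0' x0] by (simp add: x0'_def)
  ultimately have "{x \<in> Rn n. coeff (P x) e = 0} \<in> null_sets (lebn n)"
    using Suc.IH[OF P(2)] by blast
  then have ae: "AE x in lebn n. coeff (P x) e \<noteq> 0"
    by (rule AE_I') auto
  have f_meas [measurable]: "f \<in> borel_measurable (lebn (Suc n))"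
    using Suc.prems(1) by (rule alg_poly_measurable)
  have "{x \<in> space (lebn (Suc n)). f x = 0} \<in> sets (lebn (Suc n))"
    by measurable
  moreover have "AE x in lebn n. countable {t. x(n := t) \<in> {x \<in> Rn (Suc n). f x = 0}}"
    using ae
  proof eventually_elim
    case (elim x)
    then have "P x \<noteq> 0" by auto
    moreover have "P (x(n := t)) = P x" for t by (rule P_cong) simp
    ultimately have "{t. x(n := t) \<in> {x \<in> Rn (Suc n). f x = 0}} \<subseteq> {t. poly (P x) t = 0}"
      using P(1) by auto
    then show ?case
      using poly_roots_finite[OF \<open>P x \<noteq> 0\<close>] by (meson countable_finite countable_subset)
  qed
  ultimately show ?case by (intro null_sets_lebn_SucI) simp_all
qed

lemma Rn_interior_point_mono:
  "Rn_interior_point n A x \<Longrightarrow> A \<subseteq> B \<Longrightarrow> Rn_interior_point n B x"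
  unfolding Rn_interior_point_def by blast

lemma Rn_interior_point_Int:
  assumes "Rn_interior_point n A x" "Rn_interior_point n B x"
  shows "Rn_interior_point n (A \<inter> B) x"
proof -
  obtain d e where "d > 0" "\<forall>y\<in>Rn n. (\<forall>i<n. \<bar>y i - x i\<bar> < d) \<longrightarrow> y \<in> A"
    "e > 0" "\<forall>y\<in>Rn n. (\<forall>i<n. \<bar>y i - x i\<bar> < e) \<longrightarrow> y \<in> B"
    using assms unfolding Rn_interior_point_def by blast
  then show ?thesis unfolding Rn_interior_point_def by (intro exI[of _ "min d e"]) auto
qed

lemma semialg_AE_interior_point:
  "A \<in> semialg n \<Longrightarrow> AE x in lebn n. x \<in> A \<longrightarrow> Rn_interior_point n A x"
proof (induction A rule: semialg.induct)
  case (zero f)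
  show ?case
  proof (cases "\<exists>x0\<in>Rn n. f x0 \<noteq> 0")
    case True
    then have "{x \<in> Rn n. f x = 0} \<in> null_sets (lebn n)"
      using alg_poly_zero_set_null[OF zero] by blast
    then show ?thesis by (auto dest: AE_not_in)
  next
    case False
    then have "{x \<in> Rn n. f x = 0} = Rn n" by auto
    then show ?thesis by (auto simp: Rn_interior_point_def intro: exI[of _ 1])
  qed
next
  case (pos g)
  then show ?case by (auto intro: alg_poly_pos_interior_point)
next
  case (inter A B)
  from inter.IH show ?case by eventually_elim (auto intro: Rn_interior_point_Int)
next
  case (union A B)
  from union.IH show ?case by eventually_elim (blast intro: Rn_interior_point_mono)
qed

lemma semialg_nonempty_interior:
  assumes A: "A \<in> semialg n" and pos: "emeasure (lebn n) A \<noteq> 0"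
  shows "nonempty_interior n A"
proof (rule ccontr)
  assume "\<not> nonempty_interior n A"
  then have "AE x in lebn n. x \<notin> A"
    using semialg_AE_interior_point[OF A] by (auto simp: nonempty_interior_iff)
  then show False
    using pos sets_lebn_semialg[OF A] semialg_subset_Rn[OF A]
    by (subst (asm) AE_iff_measurable[where N = A]) auto
qed

lemma semialg_closed_superset:
  "A \<in> semialg n \<Longrightarrow> \<exists>C\<in>semialg n. A \<subseteq> C \<and> closed C \<and> (AE x in lebn n. x \<in> C \<longrightarrow> x \<in> A)"
proof (induction A rule: semialg.induct)
  case (zero f)
  then show ?case using closed_alg_poly_zero semialg.zero by blast
next
  case (pos g)
  show ?case
  proof (cases "\<exists>x0\<in>Rn n. g x0 \<noteq> 0")
    case True
    then have "{x \<in> Rn n. g x = 0} \<in> null_sets (lebn n)"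
      using alg_poly_zero_set_null[OF pos] by blast
    then have "AE x in lebn n. x \<in> {x \<in> Rn n. g x \<ge> 0} \<longrightarrow> x \<in> {x \<in> Rn n. g x > 0}"
      by (rule AE_not_in[THEN AE_mp]) auto
    then show ?thesis
      using semialg_nonneg[OF pos] closed_alg_poly_nonneg[OF pos]
      by (intro bexI[of _ "{x \<in> Rn n. g x \<ge> 0}"] conjI) auto
  next
    case False
    then have "{x \<in> Rn n. g x > 0} = {}" by auto
    then show ?thesis using semialg_empty by auto
  qed
next
  case (inter A B)
  then obtain C D where "C \<in> semialg n" "A \<subseteq> C" "closed C" "AE x in lebn n. x \<in> C \<longrightarrow> x \<in> A"
    "D \<in> semialg n" "B \<subseteq> D" "closed D" "AE x in lebn n. x \<in> D \<longrightarrow> x \<in> B"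
    by blast
  then show ?case
    by (intro bexI[of _ "C \<inter> D"] conjI semialg.inter closed_Int) auto
next
  case (union A B)
  then obtain C D where "C \<in> semialg n" "A \<subseteq> C" "closed C" "AE x in lebn n. x \<in> C \<longrightarrow> x \<in> A"
    "D \<in> semialg n" "B \<subseteq> D" "closed D" "AE x in lebn n. x \<in> D \<longrightarrow> x \<in> B"
    by blast
  then show ?case
    by (intro bexI[of _ "C \<union> D"] conjI semialg.union closed_Un) auto
qed

definition cbox_Rn :: "nat \<Rightarrow> (nat \<Rightarrow> real) \<Rightarrow> (nat \<Rightarrow> real) \<Rightarrow> (nat \<Rightarrow> real) set" where
  "cbox_Rn n a b = PiE {..<n} (\<lambda>i. {a i..b i})"

definition box_Rn :: "nat \<Rightarrow> (nat \<Rightarrow> real) \<Rightarrow> (nat \<Rightarrow> real) \<Rightarrow> (nat \<Rightarrow> real) set" where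
  "box_Rn n a b = PiE {..<n} (\<lambda>i. {a i<..<b i})"

lemma cbox_Rn_eq: "cbox_Rn n a b = {x \<in> Rn n. \<forall>i<n. a i \<le> x i \<and> x i \<le> b i}"
  unfolding cbox_Rn_def Rn_def by (rule set_eqI) (simp add: PiE_iff, blast)

lemma box_Rn_eq: "box_Rn n a b = {x \<in> Rn n. \<forall>i<n. a i < x i \<and> x i < b i}"
  unfolding box_Rn_def Rn_def by (rule set_eqI) (simp add: PiE_iff, blast)

lemma mem_cbox_Rn: "x \<in> cbox_Rn n a b \<longleftrightarrow> x \<in> Rn n \<and> (\<forall>i<n. a i \<le> x i \<and> x i \<le> b i)"
  by (simp add: cbox_Rn_eq)

lemma mem_box_Rn: "x \<in> box_Rn n a b \<longleftrightarrow> x \<in> Rn n \<and> (\<forall>i<n. a i < x i \<and> x i < b i)"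
  by (simp add: box_Rn_eq)

lemma box_subset_cbox_Rn: "box_Rn n a b \<subseteq> cbox_Rn n a b"
  unfolding mem_box_Rn mem_cbox_Rn subset_iff by (meson less_imp_le)

lemma box_Rn_mono:
  assumes "\<And>i. i < n \<Longrightarrow> b i \<le> b' i"
  shows "box_Rn n a b \<subseteq> box_Rn n a b'"
  unfolding box_Rn_def
proof (intro PiE_mono subsetI)
  fix i x assume "i \<in> {..<n}" "x \<in> {a i<..<b i}"
  then show "x \<in> {a i<..<b' i}" using assms[of i] by auto
qed

lemma semialg_cbox_Rn:
  assumes "\<And>i. i < n \<Longrightarrow> ralg (a i) \<and> ralg (b i)"
  shows "cbox_Rn n a b \<in> semialg n"
proof -
  have "{x \<in> Rn n. a i \<le> x i \<and> x i \<le> b i} \<in> semialg n" if "i < n" for i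
  proof -
    have eq: "{x \<in> Rn n. a i \<le> x i \<and> x i \<le> b i} =
        {x \<in> Rn n. x i - a i \<ge> 0} \<inter> {x \<in> Rn n. b i - x i \<ge> 0}" by auto
    show ?thesis
      unfolding eq using assms[OF that] that
      by (intro semialg.inter semialg_nonneg alg_poly_diff alg_poly.var alg_poly.const) auto
  qed
  then show ?thesis unfolding cbox_Rn_eq by (rule semialg_INT_lessThan)
qed

lemma semialg_box_Rn:
  assumes "\<And>i. i < n \<Longrightarrow> ralg (a i) \<and> ralg (b i)"
  shows "box_Rn n a b \<in> semialg n"
proof -
  have "{x \<in> Rn n. a i < x i \<and> x i < b i} \<in> semialg n" if "i < n" for i
  proof -
    have eq: "{x \<in> Rn n. a i < x i \<and> x i < b i} =
        {x \<in> Rn n. x i - a i > 0} \<inter> {x \<in> Rn n. b i - x i > 0}" by auto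
    show ?thesis
      unfolding eq using assms[OF that] that
      by (intro semialg.inter semialg.pos alg_poly_diff alg_poly.var alg_poly.const) auto
  qed
  then show ?thesis unfolding box_Rn_eq by (rule semialg_INT_lessThan)
qed

lemma emeasure_lebn_PiE:
  assumes "\<And>i. i < n \<Longrightarrow> A i \<in> sets lborel"
  shows "emeasure (lebn n) (PiE {..<n} A) = (\<Prod>i<n. emeasure lborel (A i))"
proof -
  interpret product_sigma_finite "\<lambda>_ :: nat. lborel :: real measure" by standard
  show ?thesis unfolding lebn_def using assms by (subst emeasure_PiM) auto
qed

lemma sets_lebn_cbox_Rn: "cbox_Rn n a b \<in> sets (lebn n)"
  unfolding cbox_Rn_def lebn_def by (rule sets_PiM_I_finite) auto

lemma emeasure_cbox_Rn:
  "(\<And>i. i < n \<Longrightarrow> a i \<le> b i) \<Longrightarrow> emeasure (lebn n) (cbox_Rn n a b) = ennreal (\<Prod>i<n. b i - a i)"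
  unfolding cbox_Rn_def by (auto simp: emeasure_lebn_PiE intro!: prod_ennreal)

lemma measure_cbox_Rn:
  "(\<And>i. i < n \<Longrightarrow> a i \<le> b i) \<Longrightarrow> measure (lebn n) (cbox_Rn n a b) = (\<Prod>i<n. b i - a i)"
  by (rule measure_eq_emeasure_eq_ennreal) (auto simp: emeasure_cbox_Rn intro!: prod_nonneg)

lemma measure_box_Rn:
  "(\<And>i. i < n \<Longrightarrow> a i \<le> b i) \<Longrightarrow> measure (lebn n) (box_Rn n a b) = (\<Prod>i<n. b i - a i)"
  unfolding box_Rn_def
  by (rule measure_eq_emeasure_eq_ennreal) (auto simp: emeasure_lebn_PiE intro!: prod_nonneg prod_ennreal)

lemma compact_cbox_Rn: "compact (cbox_Rn n a b)"
proof -
  have eq: "cbox_Rn n a b = PiE UNIV (\<lambda>i. if i < n then {a i..b i} else {undefined})"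
    unfolding cbox_Rn_def by (rule set_eqI) (auto simp: PiE_iff extensional_def)
  have "compactin (product_topology (\<lambda>_. euclidean) UNIV)
      (PiE UNIV (\<lambda>i. if i < n then {a i..b i} else {undefined :: real}))"
    unfolding compactin_PiE by (auto simp: compactin_euclidean_iff)
  then show ?thesis unfolding eq euclidean_product_topology compactin_euclidean_iff .
qed

lemma compact_Diff_box_Rn:
  assumes "compact K" "K \<subseteq> Rn n"
  shows "compact (K - box_Rn n a b)"
proof -
  have "open (\<Inter>i<n. {x :: nat \<Rightarrow> real. a i < x i} \<inter> {x. x i < b i})"
    by (intro open_INT finite_lessThan ballI open_Int
        open_Collect_less[OF continuous_on_const continuous_on_product_coordinates]
        open_Collect_less[OF continuous_on_product_coordinates continuous_on_const])
  moreover have "K - box_Rn n a b = K - (\<Inter>i<n. {x. a i < x i} \<inter> {x. x i < b i})"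
    using assms(2) by (auto simp: mem_box_Rn)
  ultimately show ?thesis using compact_diff[OF assms(1)] by simp
qed

lemma compact_subset_cbox_Rn:
  assumes "compact K" "K \<subseteq> Rn n"
  obtains R :: nat where "K \<subseteq> cbox_Rn n (\<lambda>_. - real R) (\<lambda>_. real R)"
proof -
  have "\<exists>B. \<forall>x\<in>K. \<bar>x i\<bar> \<le> B" for i
  proof -
    have "compact ((\<lambda>x. x i) ` K)"
      by (rule compact_continuous_image[OF continuous_on_subset[OF continuous_on_product_coordinates]
            assms(1)]) simp
    then have "bounded ((\<lambda>x. x i) ` K)" by (rule compact_imp_bounded)
    then show ?thesis unfolding bounded_real by auto
  qed
  then obtain B where B: "\<And>i x. x \<in> K \<Longrightarrow> \<bar>x i\<bar> \<le> B i"
    by metis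
  obtain R :: nat where R: "(\<Sum>i<n. \<bar>B i\<bar>) \<le> R" using real_arch_simple by blast
  have bound: "\<bar>x i\<bar> \<le> R" if "x \<in> K" "i < n" for x i
  proof -
    have "\<bar>x i\<bar> \<le> \<bar>B i\<bar>" using B[OF that(1), of i] by linarith
    also have "\<dots> \<le> (\<Sum>i<n. \<bar>B i\<bar>)" using that(2) by (intro member_le_sum) auto
    finally show ?thesis using R by simp
  qed
  show ?thesis
  proof (intro that subsetI)
    fix x assume x: "x \<in> K"
    have "- real R \<le> x i \<and> x i \<le> real R" if "i < n" for i
      using bound[OF x that] by linarith
    then show "x \<in> cbox_Rn n (\<lambda>_. - real R) (\<lambda>_. real R)"
      using x assms(2) by (auto simp: mem_cbox_Rn)
  qed
qed

lemma emeasure_lebn_compact_finite: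
  assumes "compact K" "K \<subseteq> Rn n"
  shows "emeasure (lebn n) K \<noteq> \<infinity>"
proof -
  obtain R :: nat where R: "K \<subseteq> cbox_Rn n (\<lambda>_. - real R) (\<lambda>_. real R)"
    using compact_subset_cbox_Rn[OF assms] .
  have "emeasure (lebn n) K \<le> emeasure (lebn n) (cbox_Rn n (\<lambda>_. - real R) (\<lambda>_. real R))"
    using R by (rule emeasure_mono[OF _ sets_lebn_cbox_Rn])
  also have "\<dots> = ennreal (\<Prod>i<n. real R - - real R)"
    by (rule emeasure_cbox_Rn) simp
  finally show ?thesis by (auto simp: top_unique)
qed

section \<open>Dyadic cubes\<close>

definition dyadic_cube :: "nat \<Rightarrow> nat \<Rightarrow> (nat \<Rightarrow> int) \<Rightarrow> (nat \<Rightarrow> real) set" where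
  "dyadic_cube n m z = cbox_Rn n (\<lambda>i. z i / 2 ^ m) (\<lambda>i. (z i + 1) / 2 ^ m)"

definition dyadic_box :: "nat \<Rightarrow> nat \<Rightarrow> (nat \<Rightarrow> int) \<Rightarrow> (nat \<Rightarrow> real) set" where
  "dyadic_box n m z = box_Rn n (\<lambda>i. z i / 2 ^ m) (\<lambda>i. (z i + 1) / 2 ^ m)"

lemma mem_dyadic_cube:
  "y \<in> dyadic_cube n m z \<longleftrightarrow> y \<in> Rn n \<and> (\<forall>i<n. z i \<le> y i * 2 ^ m \<and> y i * 2 ^ m \<le> z i + 1)"
  by (simp add: dyadic_cube_def mem_cbox_Rn pos_divide_le_eq pos_le_divide_eq)

lemma mem_dyadic_box:
  "y \<in> dyadic_box n m z \<longleftrightarrow> y \<in> Rn n \<and> (\<forall>i<n. z i < y i * 2 ^ m \<and> y i * 2 ^ m < z i + 1)"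
  by (simp add: dyadic_box_def mem_box_Rn pos_divide_less_eq pos_less_divide_eq)

lemma emeasure_dyadic_cube: "emeasure (lebn n) (dyadic_cube n m z) = ennreal ((1 / 2 ^ m) ^ n)"
  unfolding dyadic_cube_def by (subst emeasure_cbox_Rn) (simp_all add: divide_right_mono add_divide_distrib)

lemma mem_dyadic_cube_floor: "x \<in> Rn n \<Longrightarrow> x \<in> dyadic_cube n m (\<lambda>i. \<lfloor>x i * 2 ^ m\<rfloor>)"
  by (simp add: mem_dyadic_cube)

lemma dyadic_cube_floor_near:
  assumes "y \<in> dyadic_cube n m (\<lambda>i. \<lfloor>x i * 2 ^ m\<rfloor>)" "i < n"
  shows "\<bar>y i - x i\<bar> \<le> 1 / 2 ^ m"
proof -
  have "\<lfloor>x i * 2 ^ m\<rfloor> \<le> y i * 2 ^ m" "y i * 2 ^ m \<le> \<lfloor>x i * 2 ^ m\<rfloor> + 1"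
    using assms unfolding mem_dyadic_cube by auto
  moreover have "\<lfloor>x i * 2 ^ m\<rfloor> \<le> x i * 2 ^ m" "x i * 2 ^ m < \<lfloor>x i * 2 ^ m\<rfloor> + 1"
    by linarith+
  ultimately have "\<bar>y i * 2 ^ m - x i * 2 ^ m\<bar> \<le> 1" by linarith
  then show ?thesis by (simp add: pos_le_divide_eq flip: abs_mult_pos left_diff_distrib)
qed

lemma dyadic_cube_Int_dyadic_box:
  assumes "z \<in> extensional {..<n}" "z' \<in> extensional {..<n}" "z \<noteq> z'"
  shows "dyadic_cube n m z' \<inter> dyadic_box n m z = {}"
proof -
  have "z = z'" if "y \<in> dyadic_cube n m z'" "y \<in> dyadic_box n m z" for y
  proof (rule extensionalityI[OF assms(1,2)])
    fix i assume "i \<in> {..<n}"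
    then have "z' i \<le> y i * 2 ^ m" "y i * 2 ^ m \<le> z' i + 1" "z i < y i * 2 ^ m" "y i * 2 ^ m < z i + 1"
      using that unfolding mem_dyadic_cube mem_dyadic_box by auto
    then have "real_of_int (z' i) < real_of_int (z i + 1)" "real_of_int (z i) < real_of_int (z' i + 1)"
      by simp_all
    then show "z i = z' i" unfolding of_int_less_iff by linarith
  qed
  then show ?thesis using assms(3) by blast
qed

text \<open>Cube indices are taken extensional, so that distinct indices give distinct cubes.\<close>

definition inner_dyadic_cubes :: "nat \<Rightarrow> nat \<Rightarrow> (nat \<Rightarrow> real) set \<Rightarrow> (nat \<Rightarrow> int) set" where
  "inner_dyadic_cubes n m K = {z \<in> extensional {..<n}. dyadic_cube n m z \<subseteq> K}"

lemma finite_inner_dyadic_cubes: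
  assumes "compact K" "K \<subseteq> Rn n"
  shows "finite (inner_dyadic_cubes n m K)"
proof -
  obtain R :: nat where R: "K \<subseteq> cbox_Rn n (\<lambda>_. - real R) (\<lambda>_. real R)"
    using compact_subset_cbox_Rn[OF assms] .
  define M :: int where "M = R * 2 ^ m"
  have "inner_dyadic_cubes n m K \<subseteq> PiE {..<n} (\<lambda>_. {-M..M})"
  proof
    fix z assume z: "z \<in> inner_dyadic_cubes n m K"
    define y where "y = restrict (\<lambda>i. z i / 2 ^ m) {..<n}"
    have "y \<in> Rn n" by (simp add: y_def Rn_def)
    then have "y \<in> dyadic_cube n m z"
      by (simp add: y_def mem_dyadic_cube)
    then have "y \<in> cbox_Rn n (\<lambda>_. - real R) (\<lambda>_. real R)"
      using z R by (auto simp: inner_dyadic_cubes_def)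
    then have "- real R * 2 ^ m \<le> z i \<and> z i \<le> real R * 2 ^ m" if "i < n" for i
      using that by (auto simp: mem_cbox_Rn y_def pos_divide_le_eq pos_le_divide_eq)
    then have "real_of_int (- M) \<le> real_of_int (z i) \<and> real_of_int (z i) \<le> real_of_int M"
      if "i < n" for i
      using that by (simp add: M_def)
    then have "- M \<le> z i \<and> z i \<le> M" if "i < n" for i
      using that unfolding of_int_le_iff by blast
    then show "z \<in> PiE {..<n} (\<lambda>_. {-M..M})"
      using z by (auto simp: inner_dyadic_cubes_def PiE_iff)
  qed
  then show ?thesis by (rule finite_subset) (intro finite_PiE finite_lessThan finite_atLeastAtMost_int)
qed

lemma Rn_interior_point_in_inner_dyadic_cubes:
  assumes x: "x \<in> Rn n" "Rn_interior_point n K x"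
  obtains m where "\<And>j. m \<le> j \<Longrightarrow> \<exists>z\<in>inner_dyadic_cubes n j K. x \<in> dyadic_cube n j z"
proof -
  obtain e where e: "e > 0" "\<forall>y\<in>Rn n. (\<forall>i<n. \<bar>y i - x i\<bar> < e) \<longrightarrow> y \<in> K"
    using x(2) unfolding Rn_interior_point_def by blast
  obtain m where m: "(1 / 2) ^ m < e"
    using real_arch_pow_inv[OF e(1), of "1 / 2"] by auto
  have "\<exists>z\<in>inner_dyadic_cubes n j K. x \<in> dyadic_cube n j z" if "m \<le> j" for j
  proof -
    define z where "z = restrict (\<lambda>i. \<lfloor>x i * 2 ^ j\<rfloor>) {..<n}"
    have cube_eq: "dyadic_cube n j z = dyadic_cube n j (\<lambda>i. \<lfloor>x i * 2 ^ j\<rfloor>)"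
      unfolding dyadic_cube_def cbox_Rn_def z_def by (intro PiE_cong) simp
    have "dyadic_cube n j z \<subseteq> K"
    proof
      fix y assume y: "y \<in> dyadic_cube n j z"
      have "\<bar>y i - x i\<bar> < e" if "i < n" for i
      proof -
        have "\<bar>y i - x i\<bar> \<le> (1 / 2) ^ j"
          using dyadic_cube_floor_near[OF y[unfolded cube_eq] that] by (simp add: power_one_over)
        also have "\<dots> \<le> (1 / 2) ^ m"
          using \<open>m \<le> j\<close> by (intro power_decreasing) auto
        finally show ?thesis using m by linarith
      qed
      moreover have "y \<in> Rn n" using y by (simp add: mem_dyadic_cube)
      ultimately show "y \<in> K" using e(2) by blast
    qed
    moreover have "x \<in> dyadic_cube n j z"
      unfolding cube_eq using x(1) by (rule mem_dyadic_cube_floor)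
    ultimately show ?thesis by (auto simp: inner_dyadic_cubes_def z_def)
  qed
  then show ?thesis using that by blast
qed

text \<open>Almost every point of \<open>K\<close> is interior and hence eventually lies in a dyadic cube inside
  \<open>K\<close>, so these cubes exhaust \<open>K\<close> up to a null set.\<close>

lemma inner_dyadic_cubes_approx:
  assumes K: "K \<in> semialg n" "compact K" and c: "0 \<le> c" "c < measure (lebn n) K"
  obtains m where "c < card (inner_dyadic_cubes n m K) * (1 / 2 ^ m) ^ n"
proof -
  have KR: "K \<subseteq> Rn n" using K(1) by (rule semialg_subset_Rn)
  define G where "G m = (\<Union>z\<in>inner_dyadic_cubes n m K. dyadic_cube n m z)" for m
  define H where "H m = (\<Inter>j\<in>{m..}. G j)" for m
  have fin: "finite (inner_dyadic_cubes n m K)" for m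
    using K(2) KR by (rule finite_inner_dyadic_cubes)
  have G_sets: "G m \<in> sets (lebn n)" for m
    unfolding G_def dyadic_cube_def using fin by (intro sets.finite_UN sets_lebn_cbox_Rn)
  have H_sets: "H m \<in> sets (lebn n)" for m
    unfolding H_def using G_sets by (intro sets.countable_INT) auto
  have "incseq H"
    unfolding incseq_def H_def by (intro allI impI INF_superset_mono) auto
  have "AE x in lebn n. x \<in> K \<longrightarrow> x \<in> (\<Union>m. H m)"
    using semialg_AE_interior_point[OF K(1)] AE_space
  proof eventually_elim
    case (elim x)
    show ?case
    proof
      assume "x \<in> K"
      with elim obtain m where "\<And>j. m \<le> j \<Longrightarrow> \<exists>z\<in>inner_dyadic_cubes n j K. x \<in> dyadic_cube n j z"
        using Rn_interior_point_in_inner_dyadic_cubes by (metis space_lebn)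
      then show "x \<in> (\<Union>m. H m)" by (auto simp: H_def G_def)
    qed
  qed
  moreover have "(\<Union>m. H m) \<in> sets (lebn n)"
    using H_sets by (intro sets.countable_UN) auto
  ultimately have "emeasure (lebn n) K \<le> emeasure (lebn n) (\<Union>m. H m)"
    by (rule emeasure_mono_AE)
  also have "\<dots> = (SUP m. emeasure (lebn n) (H m))"
    using H_sets \<open>incseq H\<close> by (intro SUP_emeasure_incseq[symmetric]) auto
  finally have K_le: "emeasure (lebn n) K \<le> (SUP m. emeasure (lebn n) (H m))" .
  have "ennreal c < emeasure (lebn n) K"
    using c emeasure_lebn_compact_finite[OF K(2) KR]
    by (simp add: emeasure_eq_ennreal_measure ennreal_less_iff)
  then have "ennreal c < (SUP m. emeasure (lebn n) (H m))"
    using K_le by (rule less_le_trans)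
  then obtain m where "ennreal c < emeasure (lebn n) (H m)"
    by (auto simp: less_SUP_iff)
  also have "\<dots> \<le> emeasure (lebn n) (G m)"
    using G_sets by (intro emeasure_mono) (auto simp: H_def)
  also have "\<dots> \<le> (\<Sum>z\<in>inner_dyadic_cubes n m K. emeasure (lebn n) (dyadic_cube n m z))"
    unfolding G_def dyadic_cube_def using fin
    by (intro emeasure_subadditive_finite) (auto intro: sets_lebn_cbox_Rn)
  also have "\<dots> = ennreal (card (inner_dyadic_cubes n m K) * (1 / 2 ^ m) ^ n)"
    by (simp add: emeasure_dyadic_cube ennreal_of_nat_eq_real_of_nat ennreal_mult)
  finally show ?thesis using c(1) that by (simp add: ennreal_less_iff)
qed

section \<open>Volumes of compact semialgebraic sets\<close>

definition semialg_volume :: "nat \<Rightarrow> real \<Rightarrow> bool" where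
  "semialg_volume n v \<longleftrightarrow> (\<exists>K\<in>semialg n. compact K \<and> measure (lebn n) K = v)"

lemma semialg_compact_Diff_box_Rn:
  assumes K: "K \<in> semialg n" "compact K"
    and ab: "\<And>i. i < n \<Longrightarrow> ralg (a i) \<and> ralg (b i)" "\<And>i. i < n \<Longrightarrow> a i \<le> b i"
    and sub: "box_Rn n a b \<subseteq> K"
  shows "K - box_Rn n a b \<in> semialg n" and "compact (K - box_Rn n a b)"
    and "measure (lebn n) (K - box_Rn n a b) = measure (lebn n) K - (\<Prod>i<n. b i - a i)"
proof -
  have B: "box_Rn n a b \<in> semialg n" using ab(1) by (rule semialg_box_Rn)
  show "K - box_Rn n a b \<in> semialg n" using K(1) B by (rule semialg_Diff)
  have KR: "K \<subseteq> Rn n" using K(1) by (rule semialg_subset_Rn)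
  show "compact (K - box_Rn n a b)" using K(2) KR by (rule compact_Diff_box_Rn)
  have "measure (lebn n) (K - box_Rn n a b) = measure (lebn n) K - measure (lebn n) (box_Rn n a b)"
    using emeasure_lebn_compact_finite[OF K(2) KR] sets_lebn_semialg[OF K(1)] sets_lebn_semialg[OF B] sub
    by (rule measure_Diff)
  then show "measure (lebn n) (K - box_Rn n a b) = measure (lebn n) K - (\<Prod>i<n. b i - a i)"
    using ab(2) by (simp add: measure_box_Rn)
qed

lemma semialg_volume_add:
  assumes n: "0 < n" and v: "semialg_volume n v" and c: "ralg c" "0 \<le> c"
  shows "semialg_volume n (v + c)"
proof -
  obtain K where K: "K \<in> semialg n" "compact K" "measure (lebn n) K = v"
    using v unfolding semialg_volume_def by blast
  have KR: "K \<subseteq> Rn n" using K(1) by (rule semialg_subset_Rn)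
  obtain R :: nat where R: "K \<subseteq> cbox_Rn n (\<lambda>_. - real R) (\<lambda>_. real R)"
    using compact_subset_cbox_Rn[OF K(2) KR] .
  define a :: "nat \<Rightarrow> real" where "a i = (if i = 0 then real R + 1 else 0)" for i
  define b :: "nat \<Rightarrow> real" where "b i = (if i = 0 then c + (real R + 1) else 1)" for i
  define D where "D = cbox_Rn n a b"
  have D: "D \<in> semialg n"
    unfolding D_def using ralg_add_rat[OF c(1), of "real R + 1"]
    by (intro semialg_cbox_Rn) (auto simp: a_def b_def intro: ralg_rat)
  have "K \<inter> D = {}"
  proof -
    have "x 0 \<le> real R" if "x \<in> K" for x using that R n by (auto simp: mem_cbox_Rn)
    moreover have "real R + 1 \<le> x 0" if "x \<in> D" for x
      using that n by (auto simp: D_def mem_cbox_Rn a_def)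
    ultimately show ?thesis by force
  qed
  then have "measure (lebn n) (K \<union> D) = measure (lebn n) K + measure (lebn n) D"
    using emeasure_lebn_compact_finite[OF K(2) KR]
      emeasure_lebn_compact_finite[OF _ semialg_subset_Rn[OF D]] compact_cbox_Rn
      sets_lebn_semialg[OF K(1)] sets_lebn_semialg[OF D]
    by (intro measure_Union) (auto simp: D_def)
  also have "measure (lebn n) D = (\<Prod>i<n. b i - a i)"
    unfolding D_def using c(2) by (intro measure_cbox_Rn) (simp add: a_def b_def)
  also have "(\<Prod>i<n. b i - a i) = c"
  proof -
    obtain n' where "n = Suc n'" using n by (cases n) auto
    then have "(\<Prod>i<n. b i - a i) = (b 0 - a 0) * (\<Prod>i<n'. b (Suc i) - a (Suc i))"
      by (simp only: prod.lessThan_Suc_shift)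
    then show ?thesis by (simp add: a_def b_def)
  qed
  finally show ?thesis
    unfolding semialg_volume_def using K semialg.union[OF K(1) D] compact_Un[OF K(2) compact_cbox_Rn]
    by (auto simp: D_def)
qed

lemma semialg_compact_Diff_dyadic_box:
  assumes K: "K \<in> semialg n" "compact K" and cube: "dyadic_cube n m z \<subseteq> K"
  shows "K - dyadic_box n m z \<in> semialg n" and "compact (K - dyadic_box n m z)"
    and "measure (lebn n) (K - dyadic_box n m z) = measure (lebn n) K - (1 / 2 ^ m) ^ n"
proof -
  let ?lo = "\<lambda>i. real_of_int (z i) / 2 ^ m" and ?hi = "\<lambda>i. (real_of_int (z i) + 1) / 2 ^ m"
  have "box_Rn n ?lo ?hi \<subseteq> K"
    using cube box_subset_cbox_Rn unfolding dyadic_cube_def by blast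
  moreover have "?lo i \<le> ?hi i" for i by (simp add: divide_right_mono)
  moreover have "ralg (?lo i) \<and> ralg (?hi i)" for i by (auto intro: ralg_rat)
  moreover have "(\<Prod>i<n. ?hi i - ?lo i) = (1 / 2 ^ m) ^ n" by (simp add: add_divide_distrib)
  ultimately show "K - dyadic_box n m z \<in> semialg n" "compact (K - dyadic_box n m z)"
    "measure (lebn n) (K - dyadic_box n m z) = measure (lebn n) K - (1 / 2 ^ m) ^ n"
    unfolding dyadic_box_def using semialg_compact_Diff_box_Rn[OF K] by auto
qed

text \<open>The open slab of width \<open>w = (2 ^ m) ^ (n - 1) * c\<close> in the first coordinate
  of a dyadic cube has volume exactly \<open>c\<close>, and its corners are algebraic.\<close>

lemma semialg_volume_remove_slab:
  assumes n: "0 < n" and K: "K \<in> semialg n" "compact K" and cube: "dyadic_cube n m z \<subseteq> K"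
    and c: "ralg c" "0 \<le> c" "c \<le> (1 / 2 ^ m) ^ n"
  shows "semialg_volume n (measure (lebn n) K - c)"
proof -
  define lo where "lo i = real_of_int (z i) / 2 ^ m" for i
  define hi where "hi i = (real_of_int (z i) + 1) / 2 ^ m" for i
  obtain n' where n': "n = Suc n'" using n by (cases n) auto
  define w where "w = (2 ^ m) ^ n' * c"
  define b where "b i = (if i = 0 then lo 0 + w else hi i)" for i
  have hi_lo: "hi i - lo i = 1 / 2 ^ m" for i by (simp add: hi_def lo_def field_simps)
  have "w \<le> (2 ^ m) ^ n' * (1 / 2 ^ m) ^ n"
    unfolding w_def using c(3) by (intro mult_left_mono) auto
  also have "\<dots> = 1 / 2 ^ m"
    by (simp add: n' power_one_over field_simps)
  finally have b_le: "b i \<le> hi i" for i using hi_lo[of 0] by (auto simp: b_def)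
  have lo_le: "lo i \<le> b i" for i
    using c(2) by (auto simp: b_def w_def lo_def hi_def divide_right_mono)
  have "ralg w" unfolding w_def using ralg_affine[OF c(1), of "(2 ^ m) ^ n'" 0] by simp
  then have ralg_lo_b: "ralg (lo i) \<and> ralg (b i)" for i
    using ralg_add_rat[of w "lo 0"] by (auto simp: b_def lo_def hi_def add.commute intro: ralg_rat)
  have "box_Rn n lo b \<subseteq> box_Rn n lo hi"
    using b_le by (rule box_Rn_mono)
  also have "\<dots> \<subseteq> K"
    using cube box_subset_cbox_Rn unfolding dyadic_cube_def lo_def hi_def by blast
  finally have sub: "box_Rn n lo b \<subseteq> K" .
  have "(\<Prod>i<n. b i - lo i) = (b 0 - lo 0) * (\<Prod>i<n'. b (Suc i) - lo (Suc i))"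
    by (simp only: n' prod.lessThan_Suc_shift)
  also have "\<dots> = c"
    by (simp add: b_def w_def hi_lo power_one_over field_simps)
  finally show ?thesis
    using semialg_compact_Diff_box_Rn[OF K ralg_lo_b lo_le sub]
    unfolding semialg_volume_def by metis
qed

text \<open>The open dyadic boxes are pairwise disjoint, so whole cubes can be removed one at a time
  until the remaining volume to remove fits into a slab of the next cube.\<close>

lemma semialg_volume_remove_dyadic_cubes:
  assumes n: "0 < n" and "finite Z" "Z \<subseteq> extensional {..<n}"
    and "K \<in> semialg n" "compact K" "\<And>z. z \<in> Z \<Longrightarrow> dyadic_cube n m z \<subseteq> K"
    and "ralg c" "0 \<le> c" "c \<le> card Z * (1 / 2 ^ m) ^ n"
  shows "semialg_volume n (measure (lebn n) K - c)"
  using assms(2-9)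
proof (induction Z arbitrary: K c rule: finite_induct)
  case empty
  then show ?case unfolding semialg_volume_def by auto
next
  case (insert z Z)
  note cube_z = insert.prems(4)[OF insertI1]
  show ?case
  proof (cases "c \<le> (1 / 2 ^ m) ^ n")
    case True
    then show ?thesis using semialg_volume_remove_slab[OF n insert.prems(2,3) cube_z] insert.prems(5,6)
      by blast
  next
    case False
    note R = semialg_compact_Diff_dyadic_box[OF insert.prems(2,3) cube_z]
    have "dyadic_cube n m z' \<subseteq> K - dyadic_box n m z" if "z' \<in> Z" for z'
    proof -
      have "dyadic_cube n m z' \<inter> dyadic_box n m z = {}"
        using insert.prems(1) insert.hyps(2) that by (intro dyadic_cube_Int_dyadic_box) auto
      then show ?thesis using insert.prems(4)[of z'] that by auto
    qed
    moreover have "ralg (c - (1 / 2 ^ m) ^ n)"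
      using insert.prems(5) by (rule ralg_diff_rat) simp
    moreover have "c - (1 / 2 ^ m) ^ n \<le> card Z * (1 / 2 ^ m) ^ n"
      using insert.prems(7) insert.hyps by (simp add: algebra_simps)
    ultimately have "semialg_volume n (measure (lebn n) (K - dyadic_box n m z) - (c - (1 / 2 ^ m) ^ n))"
      using insert.prems(1) False R(1,2) by (intro insert.IH) auto
    then show ?thesis using R(3) by simp
  qed
qed

lemma semialg_volume_diff:
  assumes n: "0 < n" and v: "semialg_volume n v" and c: "ralg c" "0 \<le> c" "c \<le> v"
  shows "semialg_volume n (v - c)"
proof (cases "c = v")
  case True
  then show ?thesis
    unfolding semialg_volume_def using semialg_empty by (intro bexI[of _ "{}"]) auto
next
  case False
  obtain K where K: "K \<in> semialg n" "compact K" "measure (lebn n) K = v"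
    using v unfolding semialg_volume_def by blast
  have KR: "K \<subseteq> Rn n" using K(1) by (rule semialg_subset_Rn)
  have "c < measure (lebn n) K" using c(3) False K(3) by simp
  then obtain m where m: "c < card (inner_dyadic_cubes n m K) * (1 / 2 ^ m) ^ n"
    using inner_dyadic_cubes_approx[OF K(1,2) c(2)] by blast
  have "semialg_volume n (measure (lebn n) K - c)"
    using m by (intro semialg_volume_remove_dyadic_cubes[where m = m, OF n
        finite_inner_dyadic_cubes[OF K(2) KR] _ K(1,2) _ c(1,2)]) (auto simp: inner_dyadic_cubes_def)
  then show ?thesis using K(3) by simp
qed

lemma semialg_volume_add_ralg:
  assumes "0 < n" "semialg_volume n v" "ralg c" "0 \<le> v + c"
  shows "semialg_volume n (v + c)"
proof (cases "0 \<le> c")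
  case True
  then show ?thesis using assms semialg_volume_add by blast
next
  case False
  then show ?thesis using assms semialg_volume_diff[of n v "- c"] by simp
qed

text \<open>\<open>B - K\<close> itself need not be closed; replacing strict by non-strict polynomial
  inequalities in its description yields a closed semialgebraic superset differing from it by a
  null set.\<close>

lemma semialg_volume_cbox_Diff:
  assumes K: "K \<in> semialg n" "compact K" "K \<subseteq> cbox_Rn n a b"
    and ab: "\<And>i. i < n \<Longrightarrow> ralg (a i) \<and> ralg (b i)"
  shows "semialg_volume n (measure (lebn n) (cbox_Rn n a b) - measure (lebn n) K)"
proof -
  let ?B = "cbox_Rn n a b"
  have B: "?B \<in> semialg n" using ab by (rule semialg_cbox_Rn)
  have BR: "?B \<subseteq> Rn n" using B by (rule semialg_subset_Rn)
  obtain C where C: "C \<in> semialg n" "Rn n - K \<subseteq> C" "closed C"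
    "AE x in lebn n. x \<in> C \<longrightarrow> x \<in> Rn n - K"
    using semialg_closed_superset[OF semialg_Compl[OF K(1)]] by blast
  have L: "?B \<inter> C \<in> semialg n" "compact (?B \<inter> C)"
    using semialg.inter[OF B C(1)] compact_Int_closed[OF compact_cbox_Rn C(3)] by simp_all
  have "AE x in lebn n. x \<in> ?B \<inter> C \<longleftrightarrow> x \<in> ?B - K"
    using C(4)
  proof eventually_elim
    case (elim x)
    then show ?case using C(2) BR by auto
  qed
  then have "measure (lebn n) (?B \<inter> C) = measure (lebn n) (?B - K)"
    using sets_lebn_semialg[OF L(1)] sets_lebn_semialg[OF semialg_Diff[OF B K(1)]]
    by (rule measure_eq_AE)
  also have "\<dots> = measure (lebn n) ?B - measure (lebn n) K"
    using emeasure_lebn_compact_finite[OF compact_cbox_Rn BR] sets_lebn_cbox_Rn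
      sets_lebn_semialg[OF K(1)] K(3)
    by (rule measure_Diff)
  finally show ?thesis unfolding semialg_volume_def using L by blast
qed

lemma semialg_volume_reflect:
  assumes n: "0 < n" and v: "semialg_volume n v" and c: "ralg c" "v \<le> c"
  shows "semialg_volume n (c - v)"
proof -
  obtain K where K: "K \<in> semialg n" "compact K" "measure (lebn n) K = v"
    using v unfolding semialg_volume_def by blast
  obtain R :: nat where R: "K \<subseteq> cbox_Rn n (\<lambda>_. - real R) (\<lambda>_. real R)"
    using compact_subset_cbox_Rn[OF K(2) semialg_subset_Rn[OF K(1)]] .
  define M :: real where "M = (2 * real R) ^ n"
  have "measure (lebn n) (cbox_Rn n (\<lambda>_. - real R) (\<lambda>_. real R)) = M"
    unfolding M_def by (subst measure_cbox_Rn) auto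
  moreover have "ralg (- real R) \<and> ralg (real R)" by (auto intro: ralg_rat)
  ultimately have "semialg_volume n (M - v)"
    using semialg_volume_cbox_Diff[OF K(1,2) R] K(3) by simp
  moreover have "ralg (c - M)" using c(1) by (rule ralg_diff_rat) (simp add: M_def)
  ultimately have "semialg_volume n ((M - v) + (c - M))"
    using n c(2) by (intro semialg_volume_add_ralg) auto
  then show ?thesis by simp
qed

lemma semialg_volume_abs_add:
  assumes n: "0 < n" and q: "semialg_volume n \<bar>q\<bar>" and y: "ralg y"
  shows "semialg_volume n \<bar>q + y\<bar>"
proof -
  consider "0 \<le> q" "0 \<le> q + y" | "0 \<le> q" "q + y < 0" | "q < 0" "0 \<le> q + y" | "q < 0" "q + y < 0"
    by linarith
  then show ?thesis
  proof cases
    case 1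
    then have "\<bar>q + y\<bar> = \<bar>q\<bar> + y" by simp
    moreover have "semialg_volume n (\<bar>q\<bar> + y)"
      using semialg_volume_add_ralg[OF n q y] 1 by simp
    ultimately show ?thesis by (simp only:)
  next
    case 2
    then have "\<bar>q + y\<bar> = - y - \<bar>q\<bar>" by simp
    moreover have "semialg_volume n (- y - \<bar>q\<bar>)"
      using semialg_volume_reflect[OF n q, of "- y"] y 2 by simp
    ultimately show ?thesis by (simp only:)
  next
    case 3
    then have "\<bar>q + y\<bar> = y - \<bar>q\<bar>" by simp
    moreover have "semialg_volume n (y - \<bar>q\<bar>)"
      using semialg_volume_reflect[OF n q y] 3 by simp
    ultimately show ?thesis by (simp only:)
  next
    case 4
    then have "\<bar>q + y\<bar> = \<bar>q\<bar> + - y" by simp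
    moreover have "semialg_volume n (\<bar>q\<bar> + - y)"
      using semialg_volume_add_ralg[OF n q, of "- y"] y 4 by simp
    ultimately show ?thesis by (simp only:)
  qed
qed

lemma SA_compact_volume_iff:
  assumes "0 < v"
  shows "(\<exists>K. K \<in> SA k \<and> compact K \<and> v = measure (lebn k) K) \<longleftrightarrow> semialg_volume k v"
proof
  assume "\<exists>K. K \<in> SA k \<and> compact K \<and> v = measure (lebn k) K"
  then show "semialg_volume k v" unfolding SA_def semialg_volume_def by auto
next
  assume "semialg_volume k v"
  then obtain K where K: "K \<in> semialg k" "compact K" "measure (lebn k) K = v"
    unfolding semialg_volume_def by blast
  then have "emeasure (lebn k) K \<noteq> 0" using assms by (auto simp: measure_def)
  with K show "\<exists>K. K \<in> SA k \<and> compact K \<and> v = measure (lebn k) K"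
    unfolding SA_def using semialg_nonempty_interior by auto
qed

lemma period_deg_eq_Least:
  "p \<noteq> 0 \<Longrightarrow> period_deg p = (LEAST k. 0 < k \<and> semialg_volume k \<bar>p\<bar>)"
  unfolding period_deg_def by (simp add: SA_compact_volume_iff)

theorem mainTheorem6:
  fixes x p :: real
  assumes "ralg x" and "x \<noteq> 0"
    and "p \<in> periods" and "\<not> ralg p"
  shows "period_deg (x + p) = period_deg p"
proof -
  have "p \<noteq> 0" "x + p \<noteq> 0"
    using assms(1,4) ralg_rat[of 0] by (auto simp: add_eq_0_iff)
  have "semialg_volume k \<bar>x + p\<bar> \<longleftrightarrow> semialg_volume k \<bar>p\<bar>" if "0 < k" for k
    using semialg_volume_abs_add[OF that, of p x] semialg_volume_abs_add[OF that, of "x + p" "- x"]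
      assms(1) by (auto simp: add.commute)
  then have "(\<lambda>k. 0 < k \<and> semialg_volume k \<bar>x + p\<bar>) = (\<lambda>k. 0 < k \<and> semialg_volume k \<bar>p\<bar>)"
    by auto
  then show ?thesis
    using \<open>p \<noteq> 0\<close> \<open>x + p \<noteq> 0\<close> by (simp add: period_deg_eq_Least)
qed

end
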